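(* Let $A=\{(x_k,y_k):k\in[\ell]\}\subset\mathbb N^d$ be finite, $d=m+n$. Then for all $\bar k\in[\ell]$: (a) $\mathbb D_{\mathrm{in}}(x_{\bar k},y_{\bar k},T_F(A))=\mathbb D_{\mathrm{in}}(x_{\bar k},y_{\bar k},Z_F(A))$; (b) $\mathbb D_{\mathrm{out}}(x_{\bar k},y_{\bar k},T_F(A))=\mathbb D_{\mathrm{out}}(x_{\bar k},y_{\bar k},Z_F(A))$.
   Context: $\mathbb N$ is the set of non-negative integers; $[\ell]=\{1,\dots,\ell\}$; $K=\mathbb{R}_+^m\times(-\mathbb{R}_+^n)$. FDH technology $T_F(A)=(A+K)\cap\mathbb{R}_+^d$ and its discrete version $Z_F(A)=(A+K)\cap\mathbb N^d$. Translation distance functions: $\mathbb D_{\mathrm{in}}(x,y,T)=\sup\{\delta\in\mathbb{R}:(x-\delta1\!\!1_m,y)\in T\}$, $\mathbb D_{\mathrm{out}}(x,y,T)=\sup\{\delta\in\mathbb{R}:(x,y+\delta1\!\!1_n)\in T\}$, where $1\!\!1$ denotes a vector of ones. *)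

theory Defs
  imports "HOL-Analysis.Analysis" "HOL-Library.Extended_Real"
begin

text \<open>Points of R^d, d = m + n, are pairs (x,y) with x in R^m (inputs), y in R^n (outputs).\<close>

definition ones :: "real^'k" where
  "ones = (\<chi> i. 1)"

definition coneK :: "((real^'m) \<times> (real^'n)) set" where
  "coneK = {(a, b). (\<forall>i. 0 \<le> a $ i) \<and> (\<forall>j. b $ j \<le> 0)}"

definition nonneg_orthant :: "((real^'m) \<times> (real^'n)) set" where
  "nonneg_orthant = {(u, v). (\<forall>i. 0 \<le> u $ i) \<and> (\<forall>j. 0 \<le> v $ j)}"

definition nat_lattice :: "((real^'m) \<times> (real^'n)) set" where
  "nat_lattice = {(u, v). (\<forall>i. u $ i \<in> \<nat>) \<and> (\<forall>j. v $ j \<in> \<nat>)}"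

definition plusK :: "((real^'m) \<times> (real^'n)) set \<Rightarrow> ((real^'m) \<times> (real^'n)) set" where
  "plusK A = {(x + a, y + b) | x y a b. (x, y) \<in> A \<and> (a, b) \<in> coneK}"

definition T_F :: "((real^'m) \<times> (real^'n)) set \<Rightarrow> ((real^'m) \<times> (real^'n)) set" where
  "T_F A = plusK A \<inter> nonneg_orthant"

definition Z_F :: "((real^'m) \<times> (real^'n)) set \<Rightarrow> ((real^'m) \<times> (real^'n)) set" where
  "Z_F A = plusK A \<inter> nat_lattice"

definition D_in :: "real^'m \<Rightarrow> real^'n \<Rightarrow> ((real^'m) \<times> (real^'n)) set \<Rightarrow> ereal" where
  "D_in x y T = Sup {ereal \<delta> | \<delta>. (x - \<delta> *\<^sub>R ones, y) \<in> T}"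

definition D_out :: "real^'m \<Rightarrow> real^'n \<Rightarrow> ((real^'m) \<times> (real^'n)) set \<Rightarrow> ereal" where
  "D_out x y T = Sup {ereal \<delta> | \<delta>. (x, y + \<delta> *\<^sub>R ones) \<in> T}"

end

theory Submission
  imports Defs
begin

text \<open>
  If the input contraction (x - \<delta> 1, y) lies in T_F(A), it dominates some (x', y') in A, i.e.
  x' \<le> x - \<delta> 1 and y \<le> y'. Since x and x' are integral, x_i - x'_i \<ge> \<delta> improves to
  x_i - x'_i \<ge> \<lceil>\<delta>\<rceil>, so (x - \<lceil>\<delta>\<rceil> 1, y) still dominates (x', y') and is a lattice point:
  it lies in Z_F(A). As \<lceil>\<delta>\<rceil> \<ge> \<delta> and Z_F(A) \<subseteq> T_F(A), both suprema agree. The output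
  direction is symmetric, with nonnegativity of y + \<delta> 1 giving that of y + \<lceil>\<delta>\<rceil> 1.
\<close>

lemma ceiling_le_Ints:
  fixes r :: "'a::floor_ceiling"
  assumes "r \<in> \<int>" "\<delta> \<le> r"
  shows "of_int \<lceil>\<delta>\<rceil> \<le> r"
  using assms by (auto simp: ceiling_le_iff elim: Ints_cases)

lemma mem_plusK_iff:
  "(u, v) \<in> plusK A \<longleftrightarrow> (\<exists>(x', y') \<in> A. (\<forall>i. x' $ i \<le> u $ i) \<and> (\<forall>j. v $ j \<le> y' $ j))"
proof
  assume "(u, v) \<in> plusK A"
  then obtain x' y' a b where "(x', y') \<in> A" "u = x' + a" "v = y' + b" "(a, b) \<in> coneK"
    unfolding plusK_def by blast
  then show "\<exists>(x', y') \<in> A. (\<forall>i. x' $ i \<le> u $ i) \<and> (\<forall>j. v $ j \<le> y' $ j)"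
    by (intro bexI[of _ "(x', y')"]) (auto simp: coneK_def)
next
  assume "\<exists>(x', y') \<in> A. (\<forall>i. x' $ i \<le> u $ i) \<and> (\<forall>j. v $ j \<le> y' $ j)"
  then obtain x' y' where "(x', y') \<in> A" "\<forall>i. x' $ i \<le> u $ i" "\<forall>j. v $ j \<le> y' $ j"
    by blast
  moreover have "(u, v) = (x' + (u - x'), y' + (v - y'))"
    by simp
  ultimately show "(u, v) \<in> plusK A"
    unfolding plusK_def coneK_def by fastforce
qed

lemma Z_F_subset_T_F: "Z_F A \<subseteq> T_F A"
  by (auto simp: Z_F_def T_F_def nat_lattice_def nonneg_orthant_def Nats_altdef2)

lemma Sup_ereal_eq_if_cofinal:
  assumes "\<And>d. Q d \<Longrightarrow> P d" and "\<And>d. P d \<Longrightarrow> \<exists>d'. Q d' \<and> d \<le> d'"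
  shows "Sup {ereal d | d. P d} = Sup {ereal d | d. Q d}"
proof -
  have "Sup (ereal ` Collect P) = Sup (ereal ` Collect Q)"
    by (rule SUP_eq) (use assms in auto)
  moreover have "\<And>R. {ereal d | d. R d} = ereal ` Collect R"
    by auto
  ultimately show ?thesis
    by simp
qed

lemma T_F_input_contraction_ceiling_in_Z_F:
  assumes A: "A \<subseteq> nat_lattice" and xy: "(x, y) \<in> nat_lattice"
    and in_T: "(x - \<delta> *\<^sub>R ones, y) \<in> T_F A"
  shows "(x - of_int \<lceil>\<delta>\<rceil> *\<^sub>R ones, y) \<in> Z_F A"
proof -
  obtain x' y' where x'y': "(x', y') \<in> A"
    and dom_x: "\<And>i. x' $ i \<le> x $ i - \<delta>" and dom_y: "\<And>j. y $ j \<le> y' $ j"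
    using in_T by (force simp: T_F_def mem_plusK_iff ones_def)
  have x'_nat: "x' $ i \<in> \<nat>" for i
    using A x'y' by (auto simp: nat_lattice_def)
  have x_int: "x $ i \<in> \<int>" for i
    using xy by (auto simp: nat_lattice_def Nats_altdef2)
  have dom_x_ceil: "x' $ i \<le> x $ i - of_int \<lceil>\<delta>\<rceil>" for i
    using ceiling_le_Ints[of "x $ i - x' $ i" \<delta>] dom_x[of i] x_int[of i] x'_nat[of i]
    by (auto simp: Nats_altdef2)
  have "x $ i - of_int \<lceil>\<delta>\<rceil> \<in> \<nat>" for i
    using dom_x_ceil[of i] x_int[of i] x'_nat[of i] by (auto simp: Nats_altdef2)
  then show ?thesis
    using x'y' dom_x_ceil dom_y xy
    by (auto simp: Z_F_def mem_plusK_iff nat_lattice_def ones_def)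
qed

lemma T_F_output_expansion_ceiling_in_Z_F:
  assumes A: "A \<subseteq> nat_lattice" and xy: "(x, y) \<in> nat_lattice"
    and in_T: "(x, y + \<delta> *\<^sub>R ones) \<in> T_F A"
  shows "(x, y + of_int \<lceil>\<delta>\<rceil> *\<^sub>R ones) \<in> Z_F A"
proof -
  obtain x' y' where x'y': "(x', y') \<in> A"
    and dom_x: "\<And>i. x' $ i \<le> x $ i" and dom_y: "\<And>j. y $ j + \<delta> \<le> y' $ j"
    using in_T by (force simp: T_F_def mem_plusK_iff ones_def)
  have nonneg: "0 \<le> y $ j + \<delta>" for j
    using in_T by (simp add: T_F_def nonneg_orthant_def ones_def)
  have y'_int: "y' $ j \<in> \<int>" for j
    using A x'y' by (auto simp: nat_lattice_def Nats_altdef2)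
  have y_int: "y $ j \<in> \<int>" for j
    using xy by (auto simp: nat_lattice_def Nats_altdef2)
  have dom_y_ceil: "y $ j + of_int \<lceil>\<delta>\<rceil> \<le> y' $ j" for j
    using ceiling_le_Ints[of "y' $ j - y $ j" \<delta>] dom_y[of j] y_int[of j] y'_int[of j]
    by auto
  have "y $ j + of_int \<lceil>\<delta>\<rceil> \<in> \<nat>" for j
  proof -
    have "0 \<le> y $ j + of_int \<lceil>\<delta>\<rceil>"
      using nonneg[of j] le_of_int_ceiling[of \<delta>] by linarith
    then show ?thesis
      using y_int[of j] by (simp add: Nats_altdef2)
  qed
  then show ?thesis
    using x'y' dom_x dom_y_ceil xy
    by (auto simp: Z_F_def mem_plusK_iff nat_lattice_def ones_def)
qed

lemma D_in_T_F_eq_D_in_Z_F: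
  assumes "A \<subseteq> nat_lattice" and "(x, y) \<in> nat_lattice"
  shows "D_in x y (T_F A) = D_in x y (Z_F A)"
  unfolding D_in_def
proof (rule Sup_ereal_eq_if_cofinal)
  show "(x - \<delta> *\<^sub>R ones, y) \<in> T_F A" if "(x - \<delta> *\<^sub>R ones, y) \<in> Z_F A" for \<delta>
    using that Z_F_subset_T_F by blast
  show "\<exists>\<delta>'. (x - \<delta>' *\<^sub>R ones, y) \<in> Z_F A \<and> \<delta> \<le> \<delta>'"
    if "(x - \<delta> *\<^sub>R ones, y) \<in> T_F A" for \<delta>
    using T_F_input_contraction_ceiling_in_Z_F[OF assms that] le_of_int_ceiling by blast
qed

lemma D_out_T_F_eq_D_out_Z_F:
  assumes "A \<subseteq> nat_lattice" and "(x, y) \<in> nat_lattice"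
  shows "D_out x y (T_F A) = D_out x y (Z_F A)"
  unfolding D_out_def
proof (rule Sup_ereal_eq_if_cofinal)
  show "(x, y + \<delta> *\<^sub>R ones) \<in> T_F A" if "(x, y + \<delta> *\<^sub>R ones) \<in> Z_F A" for \<delta>
    using that Z_F_subset_T_F by blast
  show "\<exists>\<delta>'. (x, y + \<delta>' *\<^sub>R ones) \<in> Z_F A \<and> \<delta> \<le> \<delta>'"
    if "(x, y + \<delta> *\<^sub>R ones) \<in> T_F A" for \<delta>
    using T_F_output_expansion_ceiling_in_Z_F[OF assms that] le_of_int_ceiling by blast
qed

theorem mainTheorem10:
  fixes A :: "((real^'m) \<times> (real^'n)) set"
  assumes "finite A" and "A \<subseteq> nat_lattice"
  shows "\<forall>(x, y) \<in> A.
           D_in x y (T_F A) = D_in x y (Z_F A) \<and>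
           D_out x y (T_F A) = D_out x y (Z_F A)"
  using assms(2) D_in_T_F_eq_D_in_Z_F D_out_T_F_eq_D_out_Z_F by blast

end
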